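(* Let $q$ be an exponential factor. Then $\Gamma(q):=\pi_1(\mathbf B([(1,q)]))\cong\mathbb Z^{|\mathrm{Levels}(q)|}$.
   Context: Exponential factors: finite sums $q=\sum_ka_kx^k$, $a_k\in\mathbb C$, $k\in\mathbb Q_{>0}$; $\mathrm{slope}(q)$ = largest exponent with nonzero coefficient ($0$ if $q=0$); $\mathrm{ram}(q)$ = least $r\ge1$ with $q\in x^{1/r}\mathbb C[x^{1/r}]$. Galois operator $\sigma(\sum a_kx^k)=\sum a_ke^{-2\pi\sqrt{-1}k}x^k$. $\mathrm{Levels}(q)=\{\mathrm{slope}(q-\sigma^i(q)):i\in\mathbb Z\}\setminus\{0\}$. For $Q=[(1,q)]$, with $r=\mathrm{ram}(q)$, $K=\mathrm{slope}(q)$, $s=rK$: $\mathbf B(Q)=\{\mathbf a\in\mathbb C^s:\mathrm{slope}(\sigma^k(q_{\mathbf a})-\sigma^l(q_{\mathbf a}))=\mathrm{slope}(\sigma^k(q)-\sigma^l(q))\ \forall\,0\le k,l\le r\}$, where $q_{\mathbf a}=\sum_{j=1}^sa_jx^{j/r}$, with the subspace topology. *)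

theory Defs
  imports "HOL-Analysis.Analysis" "HOL-Algebra.Free_Abelian_Groups"
begin

text \<open>An exponential factor q = sum a_k x^k (k in Q_{>0}) is represented by its
coefficient function rat => complex, with finite support in the positive rationals.\<close>

definition exp_factor :: "(rat \<Rightarrow> complex) \<Rightarrow> bool" where
  "exp_factor q \<longleftrightarrow> finite {k. q k \<noteq> 0} \<and> (\<forall>k. q k \<noteq> 0 \<longrightarrow> k > 0)"

definition slope :: "(rat \<Rightarrow> complex) \<Rightarrow> rat" where
  "slope q = (if {k. q k \<noteq> 0} = {} then 0 else Max {k. q k \<noteq> 0})"

text \<open>q lies in x^(1/r) C[x^(1/r)] iff every exponent with nonzero coefficient is a
positive integer multiple of 1/r.\<close>
definition ram :: "(rat \<Rightarrow> complex) \<Rightarrow> nat" where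
  "ram q = (LEAST r::nat. r \<ge> 1 \<and>
      (\<forall>k. q k \<noteq> 0 \<longrightarrow> k > 0 \<and> of_nat r * k \<in> \<int>))"

definition sigma :: "(rat \<Rightarrow> complex) \<Rightarrow> (rat \<Rightarrow> complex)" where
  "sigma q = (\<lambda>k. exp (- 2 * of_real pi * \<i> * of_rat k) * q k)"

definition sigma_inv :: "(rat \<Rightarrow> complex) \<Rightarrow> (rat \<Rightarrow> complex)" where
  "sigma_inv q = (\<lambda>k. exp (2 * of_real pi * \<i> * of_rat k) * q k)"

definition sigma_int :: "int \<Rightarrow> (rat \<Rightarrow> complex) \<Rightarrow> (rat \<Rightarrow> complex)" where
  "sigma_int i = (if i \<ge> 0 then sigma ^^ nat i else sigma_inv ^^ nat (- i))"

definition Levels :: "(rat \<Rightarrow> complex) \<Rightarrow> rat set" where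
  "Levels q = {slope (q - sigma_int i q) | i. True} - {0}"

text \<open>q_a = sum_{j=1}^s a_j x^(j/r); points of C^s are represented as functions
nat => complex vanishing outside {1..s} (product topology = topology of C^s).\<close>
definition q_of :: "nat \<Rightarrow> nat \<Rightarrow> (nat \<Rightarrow> complex) \<Rightarrow> (rat \<Rightarrow> complex)" where
  "q_of r s a = (\<lambda>k. \<Sum>j\<in>{1..s}. if k = of_nat j / of_nat r then a j else 0)"

definition Bset :: "(rat \<Rightarrow> complex) \<Rightarrow> (nat \<Rightarrow> complex) set" where
  "Bset q = (let r = ram q; s = nat \<lfloor>of_nat r * slope q\<rfloor> in
     {a. (\<forall>j. j \<notin> {1..s} \<longrightarrow> a j = 0) \<and>
         (\<forall>k\<le>r. \<forall>l\<le>r.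
            slope ((sigma ^^ k) (q_of r s a) - (sigma ^^ l) (q_of r s a))
          = slope ((sigma ^^ k) q - (sigma ^^ l) q))})"

definition loops_at :: "'a::topological_space set \<Rightarrow> 'a \<Rightarrow> (real \<Rightarrow> 'a) set" where
  "loops_at S a = {p. path p \<and> path_image p \<subseteq> S \<and> pathstart p = a \<and> pathfinish p = a}"

definition loop_class :: "'a::topological_space set \<Rightarrow> 'a \<Rightarrow> (real \<Rightarrow> 'a) \<Rightarrow> (real \<Rightarrow> 'a) set" where
  "loop_class S a p = {q \<in> loops_at S a. homotopic_paths S p q}"

definition fundamental_group :: "'a::topological_space set \<Rightarrow> 'a \<Rightarrow> ((real \<Rightarrow> 'a) set) monoid" where
  "fundamental_group S a =
     \<lparr>carrier = loop_class S a ` loops_at S a,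
      mult = (\<lambda>P Q. {r. \<exists>p\<in>P. \<exists>q\<in>Q. r \<in> loop_class S a (p +++ q)}),
      one = loop_class S a (\<lambda>_. a)\<rparr>"

end

theory Submission
  imports Defs "HOL-Complex_Analysis.Complex_Analysis"
begin

text \<open>
  Writing \<open>r = ram q\<close>, every exponent of \<open>q\<close> lies on the grid \<open>(1/r)\<nat>\<close>, and \<open>\<sigma>\<^sup>i\<close> multiplies
  the coefficient of \<open>x\<^sup>k\<close> by a root of unity that is \<open>1\<close> iff \<open>i k \<in> \<int>\<close>. Hence each condition
  defining \<open>\<B>(Q)\<close> says only which coordinates \<open>a\<^sub>j\<close> must vanish and which must not: the
  coordinate at the top exponent of \<open>q - \<sigma>\<^sup>i q\<close> must be nonzero (these exponents are exactly
  the levels of \<open>q\<close>), the coordinates above it that \<open>\<sigma>\<^sup>i\<close> moves must be zero. So \<open>\<B>(Q)\<close> is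
  \<open>(\<complex>\<^sup>*)\<^sup>L \<times> \<complex>\<^sup>m \<times> {0}\<close> with \<open>|L| = |Levels q|\<close>, and the winding numbers of the \<open>L\<close>-coordinates
  identify its fundamental group with \<open>\<int>\<^sup>L\<close>.
\<close>

section \<open>Fundamental groups of coordinate strata\<close>

lemma carrier_fundamental_group:
  "carrier (fundamental_group S a) = loop_class S a ` loops_at S a"
  by (simp add: fundamental_group_def)

lemma joinpaths_in_loops_at:
  "p \<in> loops_at S a \<Longrightarrow> q \<in> loops_at S a \<Longrightarrow> p +++ q \<in> loops_at S a"
  unfolding loops_at_def using path_image_join_subset by fastforce

lemma loop_class_self: "p \<in> loops_at S a \<Longrightarrow> p \<in> loop_class S a p"
  by (auto simp: loop_class_def loops_at_def)

lemma loop_class_eq: "homotopic_paths S p q \<Longrightarrow> loop_class S a p = loop_class S a q"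
  using homotopic_paths_sym homotopic_paths_trans unfolding loop_class_def by blast

lemma mult_fundamental_group_loop_class:
  assumes p: "p \<in> loops_at S a" and q: "q \<in> loops_at S a"
  shows "loop_class S a p \<otimes>\<^bsub>fundamental_group S a\<^esub> loop_class S a q = loop_class S a (p +++ q)"
proof -
  have "r \<in> loop_class S a (p +++ q)"
    if "p' \<in> loop_class S a p" "q' \<in> loop_class S a q" "r \<in> loop_class S a (p' +++ q')" for p' q' r
  proof -
    have "homotopic_paths S (p +++ q) (p' +++ q')"
      using that(1,2) p q by (intro homotopic_paths_join) (auto simp: loop_class_def loops_at_def)
    then show ?thesis using loop_class_eq that(3) by metis
  qed
  moreover have "\<exists>p'\<in>loop_class S a p. \<exists>q'\<in>loop_class S a q. r \<in> loop_class S a (p' +++ q')"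
    if "r \<in> loop_class S a (p +++ q)" for r
    using loop_class_self p q that by blast
  ultimately show ?thesis unfolding fundamental_group_def by auto
qed

text \<open>Choosing a representative is harmless because \<open>W\<close> is constant on homotopy classes.\<close>

lemma fundamental_group_isomorphic_by_loop_invariant:
  assumes W_carrier: "\<And>p. p \<in> loops_at S a \<Longrightarrow> W p \<in> carrier H"
    and W_join: "\<And>p q. p \<in> loops_at S a \<Longrightarrow> q \<in> loops_at S a \<Longrightarrow> W (p +++ q) = W p \<otimes>\<^bsub>H\<^esub> W q"
    and W_eq_iff: "\<And>p q. p \<in> loops_at S a \<Longrightarrow> q \<in> loops_at S a \<Longrightarrow>
      W p = W q \<longleftrightarrow> homotopic_paths S p q"
    and W_surj: "carrier H \<subseteq> W ` loops_at S a"
  shows "fundamental_group S a \<cong> H"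
proof -
  define \<Phi> where "\<Phi> P = W (SOME p. p \<in> P)" for P
  have \<Phi>_class: "\<Phi> (loop_class S a p) = W p" if p: "p \<in> loops_at S a" for p
  proof -
    let ?p = "SOME p'. p' \<in> loop_class S a p"
    have "?p \<in> loop_class S a p" using loop_class_self[OF p] by (rule someI[of "\<lambda>p'. p' \<in> loop_class S a p"])
    then have "?p \<in> loops_at S a" "homotopic_paths S ?p p"
      by (auto simp: loop_class_def homotopic_paths_sym)
    then show ?thesis unfolding \<Phi>_def using W_eq_iff p by blast
  qed
  have \<Phi>_image: "\<Phi> ` carrier (fundamental_group S a) = W ` loops_at S a"
    unfolding carrier_fundamental_group image_image using \<Phi>_class by (rule image_cong[OF refl])
  have hom: "\<Phi> \<in> hom (fundamental_group S a) H"
  proof (rule homI)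
    fix x assume "x \<in> carrier (fundamental_group S a)"
    then obtain p where "p \<in> loops_at S a" "x = loop_class S a p"
      unfolding carrier_fundamental_group by blast
    then show "\<Phi> x \<in> carrier H" by (simp add: \<Phi>_class W_carrier)
  next
    fix x y assume "x \<in> carrier (fundamental_group S a)" "y \<in> carrier (fundamental_group S a)"
    then obtain p q where "p \<in> loops_at S a" "q \<in> loops_at S a"
      and "x = loop_class S a p" "y = loop_class S a q"
      unfolding carrier_fundamental_group by blast
    then show "\<Phi> (x \<otimes>\<^bsub>fundamental_group S a\<^esub> y) = \<Phi> x \<otimes>\<^bsub>H\<^esub> \<Phi> y"
      by (simp add: mult_fundamental_group_loop_class joinpaths_in_loops_at \<Phi>_class W_join)
  qed
  moreover have "inj_on \<Phi> (carrier (fundamental_group S a))"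
  proof (rule inj_onI)
    fix x y assume "x \<in> carrier (fundamental_group S a)" "y \<in> carrier (fundamental_group S a)"
      and "\<Phi> x = \<Phi> y"
    then obtain p q where "p \<in> loops_at S a" "q \<in> loops_at S a" "W p = W q"
      and "x = loop_class S a p" "y = loop_class S a q"
      unfolding carrier_fundamental_group by (auto simp: \<Phi>_class)
    then show "x = y" using W_eq_iff loop_class_eq by simp
  qed
  moreover have "\<Phi> ` carrier (fundamental_group S a) = carrier H"
    using \<Phi>_image W_surj W_carrier by auto
  ultimately have "\<Phi> \<in> iso (fundamental_group S a) H"
    by (simp add: iso_def bij_betw_def)
  then show ?thesis unfolding is_iso_def by blast
qed

lemma path_coordinate: "path (p :: real \<Rightarrow> 'i \<Rightarrow> 'b::topological_space) \<Longrightarrow> path (\<lambda>t. p t j)"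
  unfolding path_def by (rule continuous_on_product_then_coordinatewise)

lemma joinpaths_coordinate: "(\<lambda>t. (p +++ q) t j) = (\<lambda>t. p t j) +++ (\<lambda>t. q t j)"
  by (auto simp: joinpaths_def)

lemma homotopic_paths_coordinatewise:
  fixes p q :: "real \<Rightarrow> 'i \<Rightarrow> 'b::topological_space"
  assumes "\<And>j. homotopic_paths (S j) (\<lambda>t. p t j) (\<lambda>t. q t j)"
  shows "homotopic_paths {a. \<forall>j. a j \<in> S j} p q"
proof -
  obtain h where h: "\<And>j. continuous_on ({0..1} \<times> {0..1}) (h j) \<and> h j \<in> ({0..1} \<times> {0..1}) \<rightarrow> S j \<and>
      (\<forall>x\<in>{0..1}. h j (0, x) = p x j) \<and> (\<forall>x\<in>{0..1}. h j (1, x) = q x j) \<and>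
      (\<forall>t\<in>{0..1::real}. pathstart (h j \<circ> Pair t) = pathstart (\<lambda>t. p t j) \<and>
                       pathfinish (h j \<circ> Pair t) = pathfinish (\<lambda>t. p t j))"
    using assms unfolding homotopic_paths by metis
  show ?thesis unfolding homotopic_paths
  proof (intro exI conjI)
    show "continuous_on ({0..1} \<times> {0..1}) (\<lambda>z j. h j z)"
      using h by (intro continuous_on_coordinatewise_then_product) blast
  qed (use h in \<open>auto simp: pathstart_def pathfinish_def Pi_iff\<close>)
qed

definition coordinate_stratum :: "'i set \<Rightarrow> 'i set \<Rightarrow> ('i \<Rightarrow> complex) set" where
  "coordinate_stratum Z L = {a. (\<forall>j\<in>Z. a j = 0) \<and> (\<forall>j\<in>L. a j \<noteq> 0)}"

lemma coordinate_loop_in_punctured_plane: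
  assumes "p \<in> loops_at (coordinate_stratum Z L) b" "j \<in> L"
  shows "path (\<lambda>t. p t j)" "0 \<notin> path_image (\<lambda>t. p t j)"
    "pathstart (\<lambda>t. p t j) = b j" "pathfinish (\<lambda>t. p t j) = b j"
proof -
  have p: "path p" "path_image p \<subseteq> coordinate_stratum Z L" "p 0 = b" "p 1 = b"
    using assms(1) by (auto simp: loops_at_def pathstart_def pathfinish_def)
  show "path (\<lambda>t. p t j)" using p(1) by (rule path_coordinate)
  show "pathstart (\<lambda>t. p t j) = b j" "pathfinish (\<lambda>t. p t j) = b j"
    using p(3,4) by (simp_all add: pathstart_def pathfinish_def)
  show "0 \<notin> path_image (\<lambda>t. p t j)"
    using p(2) assms(2) by (auto simp: path_image_def coordinate_stratum_def)
qed

text \<open>Off \<open>L\<close> each coordinate ranges over the convex set \<open>{0}\<close> or \<open>\<complex>\<close>, where a straight-line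
  homotopy works, so only the \<open>L\<close>-coordinates carry topology.\<close>

lemma homotopic_paths_in_coordinate_stratum:
  assumes p: "p \<in> loops_at (coordinate_stratum Z L) b" and q: "q \<in> loops_at (coordinate_stratum Z L) b"
    and hom_L: "\<And>j. j \<in> L \<Longrightarrow> homotopic_paths (-{0}) (\<lambda>t. p t j) (\<lambda>t. q t j)"
  shows "homotopic_paths (coordinate_stratum Z L) p q"
proof -
  define S :: "_ \<Rightarrow> complex set" where "S j = (if j \<in> L then -{0} else if j \<in> Z then {0} else UNIV)" for j
  have "b \<in> coordinate_stratum Z L"
    using p pathstart_in_path_image by (fastforce simp: loops_at_def)
  then have "L \<inter> Z = {}"
    by (auto simp: coordinate_stratum_def)
  then have stratum: "coordinate_stratum Z L = {a. \<forall>j. a j \<in> S j}"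
    by (auto simp: coordinate_stratum_def S_def)
  have in_S: "p t j \<in> S j" "q t j \<in> S j" if "t \<in> {0..1}" for t j
    using p q that by (auto simp: stratum loops_at_def path_image_def image_subset_iff)
  have "homotopic_paths (S j) (\<lambda>t. p t j) (\<lambda>t. q t j)" for j
  proof (cases "j \<in> L")
    case True
    then show ?thesis using hom_L by (simp add: S_def)
  next
    case False
    then have "convex (S j)" by (simp add: S_def)
    then have "closed_segment (p t j) (q t j) \<subseteq> S j" if "t \<in> {0..1}" for t
      using in_S[OF that] by (simp add: closed_segment_subset)
    moreover have "path p" "path q" "p 0 = q 0" "p 1 = q 1"
      using p q by (auto simp: loops_at_def pathstart_def pathfinish_def)
    ultimately show ?thesis
      by (intro homotopic_paths_linear path_coordinate[of p] path_coordinate[of q])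
        (simp_all add: pathstart_def pathfinish_def)
  qed
  then show ?thesis
    unfolding stratum by (rule homotopic_paths_coordinatewise)
qed

definition coordinate_winding :: "(real \<Rightarrow> 'i \<Rightarrow> complex) \<Rightarrow> 'i \<Rightarrow> int" where
  "coordinate_winding p j = \<lfloor>Re (winding_number (\<lambda>t. p t j) 0)\<rfloor>"

lemma of_int_coordinate_winding:
  assumes "p \<in> loops_at (coordinate_stratum Z L) b" "j \<in> L"
  shows "of_int (coordinate_winding p j) = winding_number (\<lambda>t. p t j) 0"
proof -
  have "winding_number (\<lambda>t. p t j) 0 \<in> \<int>"
    using coordinate_loop_in_punctured_plane[OF assms] by (intro integer_winding_number) auto
  then obtain k where "winding_number (\<lambda>t. p t j) 0 = of_int k"
    by (auto elim: Ints_cases)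
  then show ?thesis by (simp add: coordinate_winding_def)
qed

lemma coordinate_winding_joinpaths:
  assumes "p \<in> loops_at (coordinate_stratum Z L) b" "q \<in> loops_at (coordinate_stratum Z L) b" "j \<in> L"
  shows "coordinate_winding (p +++ q) j = coordinate_winding p j + coordinate_winding q j"
proof -
  have "of_int (coordinate_winding (p +++ q) j) = winding_number ((\<lambda>t. p t j) +++ (\<lambda>t. q t j)) 0"
    using of_int_coordinate_winding[OF joinpaths_in_loops_at[OF assms(1,2)] assms(3)]
    by (simp add: joinpaths_coordinate)
  also have "\<dots> = winding_number (\<lambda>t. p t j) 0 + winding_number (\<lambda>t. q t j) 0"
    using coordinate_loop_in_punctured_plane[OF assms(1,3)] coordinate_loop_in_punctured_plane[OF assms(2,3)]
    by (intro winding_number_join) auto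
  also have "\<dots> = of_int (coordinate_winding p j + coordinate_winding q j)"
    using of_int_coordinate_winding[OF assms(1,3)] of_int_coordinate_winding[OF assms(2,3)] by simp
  finally show ?thesis by (simp only: of_int_eq_iff)
qed

lemma homotopic_paths_in_coordinate_stratum_iff:
  assumes p: "p \<in> loops_at (coordinate_stratum Z L) b" and q: "q \<in> loops_at (coordinate_stratum Z L) b"
  shows "homotopic_paths (coordinate_stratum Z L) p q \<longleftrightarrow>
    (\<forall>j\<in>L. coordinate_winding p j = coordinate_winding q j)"
proof -
  have coordinate_continuous: "continuous_on (coordinate_stratum Z L) (\<lambda>a. a j)" for j
    by (rule continuous_on_subset[OF continuous_on_product_coordinates]) simp
  have "homotopic_paths (-{0}) (\<lambda>t. p t j) (\<lambda>t. q t j) \<longleftrightarrow>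
      coordinate_winding p j = coordinate_winding q j" if j: "j \<in> L" for j
  proof -
    have "homotopic_paths (-{0}) (\<lambda>t. p t j) (\<lambda>t. q t j) \<longleftrightarrow>
        winding_number (\<lambda>t. p t j) 0 = winding_number (\<lambda>t. q t j) 0"
      using coordinate_loop_in_punctured_plane[OF p j] coordinate_loop_in_punctured_plane[OF q j]
      by (intro winding_number_homotopic_paths_eq[symmetric]) auto
    also have "\<dots> \<longleftrightarrow> coordinate_winding p j = coordinate_winding q j"
      by (simp flip: of_int_coordinate_winding[OF p j] of_int_coordinate_winding[OF q j])
    finally show ?thesis .
  qed
  moreover have "homotopic_paths (-{0}) (\<lambda>t. p t j) (\<lambda>t. q t j)"
    if "homotopic_paths (coordinate_stratum Z L) p q" "j \<in> L" for j
    using homotopic_paths_continuous_image[OF that(1) coordinate_continuous, where t = "-{0}"] that(2)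
    by (auto simp: o_def coordinate_stratum_def)
  ultimately show ?thesis
    using homotopic_paths_in_coordinate_stratum[OF p q] by blast
qed

lemma exp_2pi_int: "exp (2 * of_real pi * \<i> * of_int k) = 1"
  unfolding exp_eq_1 by (intro conjI exI[of _ k]) simp_all

lemma winding_number_circle_loop:
  fixes c :: complex and k :: int
  assumes c: "c \<noteq> 0"
  defines "g \<equiv> (\<lambda>t::real. c * exp (2 * of_real pi * \<i> * of_int k * of_real t))"
  shows "path g" "pathstart g = c" "pathfinish g = c" "0 \<notin> path_image g" "winding_number g 0 = of_int k"
proof -
  show "path g" unfolding g_def path_def by (intro continuous_intros)
  show "pathstart g = c" by (simp add: g_def pathstart_def)
  show "pathfinish g = c" using exp_2pi_int[of k] by (simp add: g_def pathfinish_def)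
  show "0 \<notin> path_image g" using c by (auto simp: g_def path_image_def)
  define h where "h t = Ln c + 2 * of_real pi * \<i> * of_int k * of_real t" for t :: real
  have "g = exp \<circ> h" unfolding g_def h_def using c by (auto simp: exp_add)
  moreover have "path h" unfolding h_def path_def by (intro continuous_intros)
  ultimately have "winding_number g 0 = (pathfinish h - pathstart h) / (2 * of_real pi * \<i>)"
    using winding_number_compose_exp by simp
  then show "winding_number g 0 = of_int k" by (simp add: h_def pathstart_def pathfinish_def)
qed

lemma coordinate_winding_surj:
  assumes b: "b \<in> coordinate_stratum Z L"
  obtains \<gamma> where "\<gamma> \<in> loops_at (coordinate_stratum Z L) b" "\<And>j. j \<in> L \<Longrightarrow> coordinate_winding \<gamma> j = k j"
proof
  define \<gamma> where "\<gamma> t = (\<lambda>j. if j \<in> L then b j * exp (2 * of_real pi * \<i> * of_int (k j) * of_real t) else b j)"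
    for t :: real
  have b_L: "j \<in> L \<Longrightarrow> b j \<noteq> 0" for j
    using b by (auto simp: coordinate_stratum_def)
  note circle = winding_number_circle_loop[OF b_L]
  have "path \<gamma>" unfolding path_def
  proof (rule continuous_on_coordinatewise_then_product)
    show "continuous_on {0..1} (\<lambda>t. \<gamma> t j)" for j
      using circle(1)[of j "k j"] by (cases "j \<in> L") (simp_all add: path_def \<gamma>_def)
  qed
  moreover have "path_image \<gamma> \<subseteq> coordinate_stratum Z L"
    using b b_L by (auto simp: path_image_def coordinate_stratum_def \<gamma>_def)
  ultimately show \<gamma>_loop: "\<gamma> \<in> loops_at (coordinate_stratum Z L) b"
    using exp_2pi_int by (auto simp: loops_at_def \<gamma>_def pathstart_def pathfinish_def)
  show "coordinate_winding \<gamma> j = k j" if j: "j \<in> L" for j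
  proof -
    have "of_int (coordinate_winding \<gamma> j) = winding_number (\<lambda>t. \<gamma> t j) 0"
      by (rule of_int_coordinate_winding[OF \<gamma>_loop j])
    also have "\<dots> = of_int (k j)"
      using circle(5)[OF j, of "k j"] j by (simp add: \<gamma>_def)
    finally show ?thesis by (simp only: of_int_eq_iff)
  qed
qed

theorem fundamental_group_coordinate_stratum:
  assumes "finite L" and b: "b \<in> coordinate_stratum Z L"
  shows "fundamental_group (coordinate_stratum Z L) b \<cong> free_Abelian_group L"
proof -
  define W where "W p = Abs_poly_mapping (\<lambda>j. if j \<in> L then coordinate_winding p j else 0)" for p
  have lookup_W: "Poly_Mapping.lookup (W p) = (\<lambda>j. if j \<in> L then coordinate_winding p j else 0)" for p
    unfolding W_def using \<open>finite L\<close> by (intro lookup_Abs_poly_mapping) (auto elim: finite_subset[rotated])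
  have W_eq_iff: "W p = W q \<longleftrightarrow> (\<forall>j\<in>L. coordinate_winding p j = coordinate_winding q j)" for p q
    by (force simp: poly_mapping_eq_iff lookup_W fun_eq_iff)
  show ?thesis
  proof (rule fundamental_group_isomorphic_by_loop_invariant)
    show "W p \<in> carrier (free_Abelian_group L)" for p
      by (auto simp: in_keys_iff lookup_W split: if_splits)
    show "W (p +++ q) = W p \<otimes>\<^bsub>free_Abelian_group L\<^esub> W q"
      if "p \<in> loops_at (coordinate_stratum Z L) b" "q \<in> loops_at (coordinate_stratum Z L) b" for p q
      using that by (intro poly_mapping_eqI) (simp add: lookup_W lookup_add coordinate_winding_joinpaths)
    show "W p = W q \<longleftrightarrow> homotopic_paths (coordinate_stratum Z L) p q"
      if "p \<in> loops_at (coordinate_stratum Z L) b" "q \<in> loops_at (coordinate_stratum Z L) b" for p q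
      using homotopic_paths_in_coordinate_stratum_iff[OF that] W_eq_iff by simp
    show "carrier (free_Abelian_group L) \<subseteq> W ` loops_at (coordinate_stratum Z L) b"
    proof
      fix c assume c: "c \<in> carrier (free_Abelian_group L)"
      obtain \<gamma> where \<gamma>: "\<gamma> \<in> loops_at (coordinate_stratum Z L) b"
        "\<And>j. j \<in> L \<Longrightarrow> coordinate_winding \<gamma> j = Poly_Mapping.lookup c j"
        using coordinate_winding_surj[OF b] by metis
      have "W \<gamma> = c"
        using c \<gamma>(2) by (intro poly_mapping_eqI) (auto simp: lookup_W in_keys_iff)
      then show "c \<in> W ` loops_at (coordinate_stratum Z L) b" using \<gamma>(1) by blast
    qed
  qed
qed

section \<open>The Galois action on exponential factors\<close>

lemma of_rat_in_Ints_iff: "(of_rat y :: real) \<in> \<int> \<longleftrightarrow> y \<in> \<int>"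
proof
  assume "of_rat y \<in> (\<int>::real set)"
  then obtain n where "(of_rat y::real) = of_int n" by (auto elim: Ints_cases)
  then have "of_rat y = (of_rat (of_int n) :: real)" by simp
  then show "y \<in> \<int>" unfolding of_rat_eq_iff by simp
qed (auto elim: Ints_cases)

lemma complex_of_real_of_rat: "complex_of_real (of_rat y) = of_rat y"
proof -
  obtain a b where "quotient_of y = (a, b)" by (cases "quotient_of y")
  then have "y = of_int a / of_int b" by (rule quotient_of_div)
  then show ?thesis by (simp add: of_rat_divide)
qed

lemma exp_2pi_of_rat_eq_1_iff: "exp (2 * of_real pi * \<i> * of_rat y) = 1 \<longleftrightarrow> y \<in> \<int>"
proof -
  have "exp (2 * of_real pi * \<i> * of_rat y) = 1 \<longleftrightarrow> (\<exists>n::int. 2 * pi * of_rat y = of_int (2 * n) * pi)"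
    by (simp add: exp_eq_1 complex_of_real_of_rat[symmetric])
  also have "\<dots> \<longleftrightarrow> (of_rat y :: real) \<in> \<int>"
    by (auto simp: algebra_simps elim: Ints_cases)
  finally show ?thesis by (simp add: of_rat_in_Ints_iff)
qed

lemma funpow_sigma_apply:
  "(sigma ^^ k) f x = exp (2 * of_real pi * \<i> * of_rat (- of_nat k * x)) * f x"
proof -
  have "(sigma ^^ k) f x = exp (- 2 * of_real pi * \<i> * of_rat x) ^ k * f x"
    by (induction k) (auto simp: sigma_def)
  also have "exp (- 2 * of_real pi * \<i> * of_rat x) ^ k = exp (of_nat k * (- 2 * of_real pi * \<i> * of_rat x))"
    by (simp only: exp_of_nat_mult)
  finally show ?thesis by (simp add: of_rat_mult of_rat_minus algebra_simps)
qed

lemma sigma_int_apply: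
  "sigma_int i f x = exp (2 * of_real pi * \<i> * of_rat (- of_int i * x)) * f x"
proof (cases "i \<ge> 0")
  case True
  then have "of_int i = (of_nat (nat i) :: rat)" by simp
  then show ?thesis using True by (simp add: sigma_int_def funpow_sigma_apply)
next
  case False
  have "(sigma_inv ^^ n) f x = exp (2 * of_real pi * \<i> * of_rat x) ^ n * f x" for n
    by (induction n) (auto simp: sigma_inv_def)
  moreover have "exp (2 * of_real pi * \<i> * of_rat x) ^ nat (-i)
      = exp (of_nat (nat (-i)) * (2 * of_real pi * \<i> * of_rat x))"
    by (simp only: exp_of_nat_mult)
  ultimately show ?thesis
    using False by (simp add: sigma_int_def of_rat_mult of_rat_minus algebra_simps)
qed

lemma funpow_sigma_diff_nonzero_iff:
  "((sigma ^^ k) f - (sigma ^^ l) f) x \<noteq> 0 \<longleftrightarrow> f x \<noteq> 0 \<and> of_int (int k - int l) * x \<notin> \<int>"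
proof -
  define c where "c = 2 * of_real pi * \<i>"
  have e: "exp (c * of_rat (- of_nat k * x))
      = exp (c * of_rat (- of_nat l * x)) * exp (c * of_rat (- (of_int (int k - int l) * x)))"
    by (simp add: exp_add[symmetric] of_rat_mult of_rat_minus of_rat_diff algebra_simps)
  have "((sigma ^^ k) f - (sigma ^^ l) f) x
      = exp (c * of_rat (- of_nat l * x)) * (exp (c * of_rat (- (of_int (int k - int l) * x))) - 1) * f x"
    unfolding fun_diff_def funpow_sigma_apply c_def[symmetric] e by (simp add: algebra_simps)
  then show ?thesis
    using exp_2pi_of_rat_eq_1_iff[of "- (of_int (int k - int l) * x)"] by (auto simp: c_def)
qed

lemma sigma_int_diff_nonzero_iff:
  "(f - sigma_int i f) x \<noteq> 0 \<longleftrightarrow> f x \<noteq> 0 \<and> of_int i * x \<notin> \<int>"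
proof -
  have "(f - sigma_int i f) x = (1 - exp (2 * of_real pi * \<i> * of_rat (- (of_int i * x)))) * f x"
    by (simp add: sigma_int_apply algebra_simps)
  then show ?thesis
    using exp_2pi_of_rat_eq_1_iff[of "- (of_int i * x)"] by auto
qed

definition Max0 :: "rat set \<Rightarrow> rat" where
  "Max0 S = (if S = {} then 0 else Max S)"

text \<open>The exponents surviving in \<open>f - \<sigma>\<^sup>d f\<close>.\<close>

definition diff_support :: "(rat \<Rightarrow> complex) \<Rightarrow> int \<Rightarrow> rat set" where
  "diff_support f d = {x. f x \<noteq> 0 \<and> of_int d * x \<notin> \<int>}"

lemma slope_eq_Max0: "slope g = Max0 {x. g x \<noteq> 0}"
  by (simp add: slope_def Max0_def)

lemma slope_sigma_int_diff: "slope (f - sigma_int d f) = Max0 (diff_support f d)"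
  unfolding slope_eq_Max0 diff_support_def by (simp only: sigma_int_diff_nonzero_iff)

lemma slope_funpow_sigma_diff:
  "slope ((sigma ^^ k) f - (sigma ^^ l) f) = Max0 (diff_support f (int k - int l))"
  unfolding slope_eq_Max0 diff_support_def by (simp only: funpow_sigma_diff_nonzero_iff)

section \<open>Ramification and the exponent grid\<close>

text \<open>The product of the denominators of all exponents clears them.\<close>

lemma exp_factor_common_denominator:
  assumes "exp_factor q"
  shows "\<exists>r::nat. r \<ge> 1 \<and> (\<forall>k. q k \<noteq> 0 \<longrightarrow> k > 0 \<and> of_nat r * k \<in> \<int>)"
proof -
  define S where "S = {k. q k \<noteq> 0}"
  have fin: "finite S" and pos: "\<And>k. k \<in> S \<Longrightarrow> k > 0"
    using assms by (auto simp: exp_factor_def S_def)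
  define N where "N = (\<Prod>k\<in>S. nat (snd (quotient_of k)))"
  have denom_pos: "\<And>k. snd (quotient_of k) > 0" using quotient_of_denom_pos' by blast
  then have "N \<ge> 1" unfolding N_def by (simp add: Suc_le_eq prod_pos)
  moreover have "of_nat N * k \<in> \<int>" if "k \<in> S" for k
  proof -
    obtain a b where ab: "quotient_of k = (a, b)" by (cases "quotient_of k")
    then have k: "k = of_int a / of_int b" by (rule quotient_of_div)
    have b: "b > 0" using denom_pos[of k] ab by simp
    have "N = nat b * (\<Prod>k\<in>S-{k}. nat (snd (quotient_of k)))"
      unfolding N_def using fin that ab by (simp add: prod.remove)
    then have "of_nat N * k = of_int a * of_nat (\<Prod>k\<in>S-{k}. nat (snd (quotient_of k)))"
      using b unfolding k by (simp add: field_simps)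
    then show ?thesis by (auto intro!: Ints_mult Ints_prod)
  qed
  ultimately show ?thesis using pos unfolding S_def by auto
qed

lemma
  assumes "exp_factor q"
  shows ram_ge_1: "ram q \<ge> 1"
    and ram_mult_in_Ints: "q k \<noteq> 0 \<Longrightarrow> of_nat (ram q) * k \<in> \<int>"
proof -
  have "ram q \<ge> 1 \<and> (\<forall>k. q k \<noteq> 0 \<longrightarrow> k > 0 \<and> of_nat (ram q) * k \<in> \<int>)"
    unfolding ram_def using exp_factor_common_denominator[OF assms] by (rule LeastI_ex)
  then show "ram q \<ge> 1" "q k \<noteq> 0 \<Longrightarrow> of_nat (ram q) * k \<in> \<int>" by auto
qed

definition grid_size :: "(rat \<Rightarrow> complex) \<Rightarrow> nat" where
  "grid_size q = nat \<lfloor>of_nat (ram q) * slope q\<rfloor>"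

lemma exp_factor_support_on_grid:
  assumes q: "exp_factor q" and x: "q x \<noteq> 0"
  shows "\<exists>j\<in>{1..grid_size q}. x = of_nat j / of_nat (ram q)"
proof -
  define r where "r = ram q"
  have r: "r \<ge> 1" using ram_ge_1[OF q] r_def by simp
  define S where "S = {k. q k \<noteq> 0}"
  have fin: "finite S" using q by (simp add: exp_factor_def S_def)
  have xS: "x \<in> S" using x S_def by simp
  have slope: "slope q = Max S" using xS by (auto simp: slope_def S_def)
  then have "slope q \<in> S" using fin xS Max_in by auto
  then obtain M where M: "of_nat r * slope q = of_int M"
    using ram_mult_in_Ints[OF q] r_def S_def by (auto elim!: Ints_cases)
  obtain m where m: "of_nat r * x = of_int m"
    using ram_mult_in_Ints[OF q x] r_def by (auto elim!: Ints_cases)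
  have "x > 0" using q x by (simp add: exp_factor_def)
  then have "m > 0"
    using m r by (metis of_int_0_less_iff of_nat_0_less_iff order_less_le_trans zero_less_mult_iff zero_less_one)
  have "x \<le> slope q" using slope fin xS by auto
  then have "m \<le> M" using m M r by (metis mult_left_mono of_int_le_iff of_nat_0_le_iff)
  with \<open>m > 0\<close> have "nat m \<in> {1..grid_size q}" using M by (simp add: grid_size_def r_def[symmetric] nat_mono)
  moreover have "x = of_nat (nat m) / of_nat r" using m \<open>m > 0\<close> r by (simp add: field_simps)
  ultimately show ?thesis unfolding r_def by blast
qed

lemma q_of_nonzero_iff:
  assumes "r \<ge> 1"
  shows "q_of r s a x \<noteq> 0 \<longleftrightarrow> (\<exists>j\<in>{1..s}. x = of_nat j / of_nat r \<and> a j \<noteq> 0)"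
proof (cases "\<exists>j\<in>{1..s}. x = of_nat j / of_nat r")
  case True
  then obtain j0 where j0: "j0 \<in> {1..s}" "x = of_nat j0 / of_nat r" by blast
  have eq: "x = of_nat j / of_nat r \<longleftrightarrow> j = j0" for j
    using assms j0 by (auto simp: field_simps)
  have "q_of r s a x = (\<Sum>j\<in>{1..s}. if j = j0 then a j else 0)"
    unfolding q_of_def by (rule sum.cong) (auto simp: eq)
  then show ?thesis using eq j0 by auto
next
  case False
  then have "q_of r s a x = 0" unfolding q_of_def by (intro sum.neutral) auto
  then show ?thesis using False by auto
qed

text \<open>Used with \<open>D\<close> the exponents of \<open>q - \<sigma>\<^sup>d q\<close> and \<open>Sa\<close> those of \<open>q\<^sub>a - \<sigma>\<^sup>d q\<^sub>a\<close>.\<close>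

lemma Max0_grid_eq_iff:
  fixes D :: "rat set" and P :: "rat \<Rightarrow> bool"
  assumes r: "r \<ge> 1"
    and D_grid: "\<And>x. x \<in> D \<Longrightarrow> \<exists>j\<in>{1..s}. x = of_nat j / of_nat r"
    and D_P: "\<And>x. x \<in> D \<Longrightarrow> P x"
    and Sa: "Sa = {x. (\<exists>j\<in>{1..s}. x = of_nat j / of_nat r \<and> a j \<noteq> 0) \<and> P x}"
  shows "Max0 Sa = Max0 D \<longleftrightarrow> (Max0 D \<noteq> 0 \<longrightarrow> a (nat \<lfloor>of_nat r * Max0 D\<rfloor>) \<noteq> 0) \<and>
           (\<forall>j\<in>{1..s}. P (of_nat j / of_nat r) \<and> Max0 D < of_nat j / of_nat r \<longrightarrow> a j = 0)"
    (is "_ \<longleftrightarrow> ?top \<and> ?above")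
proof -
  have grid: "(of_nat j / of_nat r :: rat) > 0" "nat \<lfloor>of_nat r * (of_nat j / of_nat r :: rat)\<rfloor> = j"
    if "j \<ge> 1" for j
    using r that by auto
  have "D \<subseteq> (\<lambda>j. of_nat j / of_nat r) ` {1..s}" using D_grid by blast
  then have finD: "finite D" by (rule finite_subset) simp
  have "Sa \<subseteq> (\<lambda>j. of_nat j / of_nat r) ` {1..s}" unfolding Sa by blast
  then have finS: "finite Sa" by (rule finite_subset) simp
  show ?thesis
  proof
    assume eq: "Max0 Sa = Max0 D"
    show "?top \<and> ?above"
    proof (intro conjI impI ballI)
      assume "Max0 D \<noteq> 0"
      then have "Sa \<noteq> {}" using eq by (auto simp: Max0_def split: if_splits)
      then have "Max0 Sa \<in> Sa" using finS by (simp add: Max0_def)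
      then have "Max0 D \<in> Sa" using eq by simp
      then obtain j where "j \<in> {1..s}" "Max0 D = of_nat j / of_nat r" "a j \<noteq> 0" using Sa by auto
      then show "a (nat \<lfloor>of_nat r * Max0 D\<rfloor>) \<noteq> 0" using grid(2)[of j] by simp
    next
      fix j assume j: "j \<in> {1..s}" and h: "P (of_nat j / of_nat r) \<and> Max0 D < of_nat j / of_nat r"
      show "a j = 0"
      proof (rule ccontr)
        assume "a j \<noteq> 0"
        then have "of_nat j / of_nat r \<in> Sa" using j h Sa by auto
        then have "of_nat j / of_nat r \<le> Max0 Sa" using finS by (auto simp: Max0_def)
        then show False using h eq by simp
      qed
    qed
  next
    assume h: "?top \<and> ?above"
    have below: "x \<le> Max0 D" if "x \<in> Sa" for x
      using that h grid(1) unfolding Sa by force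
    show "Max0 Sa = Max0 D"
    proof (cases "D = {}")
      case True
      then have "Sa = {}" using below grid(1) unfolding Sa by (force simp: Max0_def)
      then show ?thesis using True by (simp add: Max0_def)
    next
      case False
      have "Max0 D \<in> D" using False finD Max_in by (auto simp: Max0_def)
      moreover obtain j0 where j0: "j0 \<in> {1..s}" "Max0 D = of_nat j0 / of_nat r"
        using D_grid calculation by blast
      moreover have "a j0 \<noteq> 0" using h j0 grid[of j0] by auto
      ultimately have "Max0 D \<in> Sa" using D_P Sa by auto
      then have "Max Sa = Max0 D" using finS below by (intro Max_eqI) auto
      then show ?thesis using \<open>Max0 D \<in> Sa\<close> by (auto simp: Max0_def)
    qed
  qed
qed

section \<open>The space \<open>\<B>(Q)\<close> as a coordinate stratum\<close>

lemma mult_in_Ints_mod_iff: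
  fixes x :: rat
  assumes "of_nat r * x \<in> \<int>"
  shows "of_int d * x \<in> \<int> \<longleftrightarrow> of_int (d mod int r) * x \<in> \<int>"
proof -
  have "d = d mod int r + int r * (d div int r)" by simp
  then have "(of_int d :: rat) = of_int (d mod int r) + of_nat r * of_int (d div int r)"
    by (metis of_int_add of_int_mult of_int_of_nat_eq)
  then have "of_int d * x = of_int (d mod int r) * x + of_int (d div int r) * (of_nat r * x)"
    by (simp add: algebra_simps)
  moreover have "of_int (d div int r) * (of_nat r * x) \<in> \<int>"
    using assms by simp
  ultimately show ?thesis by (simp only: add_in_Ints_iff_right)
qed

lemma diff_support_mod_ram:
  assumes "exp_factor q"
  shows "diff_support q d = diff_support q (d mod int (ram q))"
proof -
  have "of_int d * x \<in> \<int> \<longleftrightarrow> of_int (d mod int (ram q)) * x \<in> \<int>" if "q x \<noteq> 0" for x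
    using ram_mult_in_Ints[OF assms that] by (rule mult_in_Ints_mod_iff)
  then show ?thesis unfolding diff_support_def by blast
qed

lemma Levels_eq_image:
  assumes "exp_factor q"
  shows "Levels q = (\<lambda>d. Max0 (diff_support q d)) ` {0..<int (ram q)} - {0}"
proof -
  have "Max0 (diff_support q d) \<in> (\<lambda>d. Max0 (diff_support q d)) ` {0..<int (ram q)}" for d
  proof (rule image_eqI)
    show "Max0 (diff_support q d) = Max0 (diff_support q (d mod int (ram q)))"
      by (rule arg_cong[OF diff_support_mod_ram[OF assms]])
    show "d mod int (ram q) \<in> {0..<int (ram q)}"
      using ram_ge_1[OF assms] by simp
  qed
  then have "range (\<lambda>d. Max0 (diff_support q d)) = (\<lambda>d. Max0 (diff_support q d)) ` {0..<int (ram q)}"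
    by blast
  then show ?thesis by (auto simp: Levels_def slope_sigma_int_diff)
qed

text \<open>Condition imposed on \<open>a\<close> by the pairs \<open>(k, l)\<close> with \<open>k - l = d\<close> in the definition of \<open>\<B>(Q)\<close>.\<close>

definition level_condition :: "(rat \<Rightarrow> complex) \<Rightarrow> int \<Rightarrow> (nat \<Rightarrow> complex) \<Rightarrow> bool" where
  "level_condition q d a \<longleftrightarrow>
     (Max0 (diff_support q d) \<noteq> 0 \<longrightarrow> a (nat \<lfloor>of_nat (ram q) * Max0 (diff_support q d)\<rfloor>) \<noteq> 0) \<and>
     (\<forall>j\<in>{1..grid_size q}. of_int d * (of_nat j / of_nat (ram q) :: rat) \<notin> \<int> \<and>
        Max0 (diff_support q d) < of_nat j / of_nat (ram q) \<longrightarrow> a j = 0)"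

lemma slope_q_of_eq_iff_level_condition:
  assumes q: "exp_factor q"
  shows "slope ((sigma ^^ k) (q_of (ram q) (grid_size q) a) - (sigma ^^ l) (q_of (ram q) (grid_size q) a))
      = slope ((sigma ^^ k) q - (sigma ^^ l) q) \<longleftrightarrow> level_condition q (int k - int l) a"
proof -
  define P where "P x \<longleftrightarrow> of_int (int k - int l) * x \<notin> \<int>" for x :: rat
  have slope_a: "slope ((sigma ^^ k) (q_of (ram q) (grid_size q) a) - (sigma ^^ l) (q_of (ram q) (grid_size q) a))
      = Max0 {x. (\<exists>j\<in>{1..grid_size q}. x = of_nat j / of_nat (ram q) \<and> a j \<noteq> 0) \<and> P x}"
    unfolding slope_eq_Max0 P_def
    by (simp only: funpow_sigma_diff_nonzero_iff q_of_nonzero_iff[OF ram_ge_1[OF q]])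
  have "Max0 {x. (\<exists>j\<in>{1..grid_size q}. x = of_nat j / of_nat (ram q) \<and> a j \<noteq> 0) \<and> P x}
      = Max0 (diff_support q (int k - int l)) \<longleftrightarrow> level_condition q (int k - int l) a"
    unfolding level_condition_def P_def
  proof (rule Max0_grid_eq_iff[OF ram_ge_1[OF q], where P = P, unfolded P_def])
    show "\<exists>j\<in>{1..grid_size q}. x = of_nat j / of_nat (ram q)" if "x \<in> diff_support q (int k - int l)" for x
      using that exp_factor_support_on_grid[OF q] by (simp add: diff_support_def)
  qed (simp_all add: diff_support_def)
  then show ?thesis
    unfolding slope_a slope_funpow_sigma_diff[where f = q] .
qed

lemma level_condition_mod_ram:
  assumes "exp_factor q"
  shows "level_condition q d a = level_condition q (d mod int (ram q)) a"
proof -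
  have "\<forall>j. of_int d * (of_nat j / of_nat (ram q) :: rat) \<in> \<int> \<longleftrightarrow>
      of_int (d mod int (ram q)) * (of_nat j / of_nat (ram q) :: rat) \<in> \<int>"
    using ram_ge_1[OF assms] by (intro allI mult_in_Ints_mod_iff) simp
  then show ?thesis
    unfolding level_condition_def diff_support_mod_ram[OF assms, of d] by (simp only:)
qed

lemma mem_Bset_iff:
  assumes q: "exp_factor q"
  shows "a \<in> Bset q \<longleftrightarrow>
    (\<forall>j. j \<notin> {1..grid_size q} \<longrightarrow> a j = 0) \<and> (\<forall>d\<in>{0..<int (ram q)}. level_condition q d a)"
proof -
  have "(\<forall>k\<le>ram q. \<forall>l\<le>ram q. level_condition q (int k - int l) a) \<longleftrightarrow>
      (\<forall>d\<in>{0..<int (ram q)}. level_condition q d a)"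
  proof (intro iffI ballI allI impI)
    fix d assume h: "\<forall>k\<le>ram q. \<forall>l\<le>ram q. level_condition q (int k - int l) a"
      and d: "d \<in> {0..<int (ram q)}"
    then have "nat d \<le> ram q" "int (nat d) - int 0 = d" by auto
    moreover have "level_condition q (int (nat d) - int 0) a"
      using h calculation(1) by blast
    ultimately show "level_condition q d a" by (simp only:)
  next
    fix k l assume "\<forall>d\<in>{0..<int (ram q)}. level_condition q d a"
    moreover have "(int k - int l) mod int (ram q) \<in> {0..<int (ram q)}"
      using ram_ge_1[OF q] by simp
    ultimately show "level_condition q (int k - int l) a"
      by (subst level_condition_mod_ram[OF q]) blast
  qed
  then show ?thesis
    unfolding Bset_def Let_def grid_size_def[symmetric]
    by (simp add: slope_q_of_eq_iff_level_condition[OF q])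
qed

text \<open>A level \<open>\<mu>\<close> is the top of some \<open>diff_support\<close>, hence a grid point \<open>j/r\<close>, and it
  determines the coordinate \<open>j = r\<mu>\<close>.\<close>

lemma inj_on_level_coordinate:
  assumes q: "exp_factor q"
  shows "inj_on (\<lambda>\<mu>. nat \<lfloor>of_nat (ram q) * \<mu>\<rfloor>) (Levels q)"
proof -
  have "\<mu> = of_nat (nat \<lfloor>of_nat (ram q) * \<mu>\<rfloor>) / of_nat (ram q)" if \<mu>: "\<mu> \<in> Levels q" for \<mu>
  proof -
    obtain d where d: "\<mu> = Max0 (diff_support q d)" "\<mu> \<noteq> 0"
      using \<mu> Levels_eq_image[OF q] by auto
    have "finite (diff_support q d)"
      by (rule finite_subset[of _ "{k. q k \<noteq> 0}"]) (use q in \<open>auto simp: exp_factor_def diff_support_def\<close>)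
    then have "\<mu> \<in> diff_support q d"
      using d Max_in by (fastforce simp: Max0_def split: if_splits)
    then obtain j where "\<mu> = of_nat j / of_nat (ram q)"
      using exp_factor_support_on_grid[OF q] by (auto simp: diff_support_def)
    then show ?thesis using ram_ge_1[OF q] by simp
  qed
  then show ?thesis by (intro inj_onI) metis
qed

theorem Bset_eq_coordinate_stratum:
  assumes q: "exp_factor q"
  obtains Z where "Bset q = coordinate_stratum Z ((\<lambda>\<mu>. nat \<lfloor>of_nat (ram q) * \<mu>\<rfloor>) ` Levels q)"
proof
  define Z where "Z = {j. j \<notin> {1..grid_size q}} \<union> {j \<in> {1..grid_size q}. \<exists>d\<in>{0..<int (ram q)}.
      of_int d * (of_nat j / of_nat (ram q) :: rat) \<notin> \<int> \<and> Max0 (diff_support q d) < of_nat j / of_nat (ram q)}"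
  have "a \<in> Bset q \<longleftrightarrow>
      (\<forall>j\<in>Z. a j = 0) \<and> (\<forall>j\<in>(\<lambda>\<mu>. nat \<lfloor>of_nat (ram q) * \<mu>\<rfloor>) ` Levels q. a j \<noteq> 0)" for a
    unfolding mem_Bset_iff[OF q] level_condition_def Z_def Levels_eq_image[OF q] by blast
  then show "Bset q = coordinate_stratum Z ((\<lambda>\<mu>. nat \<lfloor>of_nat (ram q) * \<mu>\<rfloor>) ` Levels q)"
    unfolding coordinate_stratum_def by blast
qed

theorem mainTheorem17:
  fixes q :: "rat \<Rightarrow> complex" and b :: "nat \<Rightarrow> complex"
  assumes "exp_factor q"
    and "b \<in> Bset q"
  shows "fundamental_group (Bset q) b \<cong> free_Abelian_group {..<card (Levels q)}"
proof -
  define L where "L = (\<lambda>\<mu>. nat \<lfloor>of_nat (ram q) * \<mu>\<rfloor>) ` Levels q"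
  obtain Z where B: "Bset q = coordinate_stratum Z L"
    using Bset_eq_coordinate_stratum[OF assms(1)] unfolding L_def by blast
  have "finite (Levels q)"
    using Levels_eq_image[OF assms(1)] by simp
  then have "finite L" "card L = card (Levels q)"
    using card_image[OF inj_on_level_coordinate[OF assms(1)]] by (simp_all add: L_def)
  then have "free_Abelian_group L \<cong> free_Abelian_group {..<card (Levels q)}"
    by (simp add: isomorphic_free_Abelian_groups eqpoll_iff_finite_card)
  moreover have "fundamental_group (Bset q) b \<cong> free_Abelian_group L"
    unfolding B using \<open>finite L\<close> assms(2)[unfolded B] by (rule fundamental_group_coordinate_stratum)
  ultimately show ?thesis by (rule iso_trans[rotated])
qed

end
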